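(* Let $m$ be a positive integer and $e$ an integer with $1<e<3^m-1$. If $x^e$ is APN over $\mathrm{GF}(3^m)$, then the ternary cyclic code $\mathcal{C}_{(1,e)}$ has parameters $[3^m-1,\,3^m-1-2m,\,4]$.
   Context: Let $q=3^m$, $n=q-1$, $\alpha$ a generator of $\mathrm{GF}(q)^*$, and $m_a(x)$ the minimal polynomial of $a\in\mathrm{GF}(q)$ over $\mathrm{GF}(3)$. $C_j$ denotes the $3$-cyclotomic coset modulo $n$ containing $j$, i.e. $\{j,3j,3^2j,\dots\}$ mod $n$. For $1<e<q-1$ with $e\notin C_1$, $\mathcal{C}_{(1,e)}$ is the cyclic code of length $n$ over $\mathrm{GF}(3)$ with generator polynomial $m_\alpha(x)m_{\alpha^e}(x)$ (when $x^e$ is APN one has $e\notin C_1$). A function $f$ on $\mathrm{GF}(q)$ is APN if $\max_{a\in\mathrm{GF}(q)^*}\max_{b\in\mathrm{GF}(q)}|\{x\in\mathrm{GF}(q): f(x+a)-f(x)=b\}|=2$. *)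

theory Defs
  imports "HOL-Computational_Algebra.Polynomial"
begin

text \<open>GF(3) viewed as the prime subfield of a field of characteristic 3:
  the roots of x^3 - x.\<close>
definition gf3 :: "'a::field set" where
  "gf3 = {x. x ^ 3 = x}"

definition min_poly3 :: "'a::field \<Rightarrow> 'a poly" where
  "min_poly3 a = (THE p. lead_coeff p = 1 \<and> set (coeffs p) \<subseteq> gf3 \<and> poly p a = 0 \<and>
      (\<forall>q. q \<noteq> 0 \<and> set (coeffs q) \<subseteq> gf3 \<and> poly q a = 0 \<longrightarrow> degree p \<le> degree q))"

definition cyclic_code :: "nat \<Rightarrow> 'a::field poly \<Rightarrow> 'a poly set" where
  "cyclic_code n g = {c. set (coeffs c) \<subseteq> gf3 \<and> degree c < n \<and> g dvd c}"

definition hamming_wt :: "'a::zero poly \<Rightarrow> nat" where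
  "hamming_wt c = card {i. coeff c i \<noteq> 0}"

definition code_1e :: "nat \<Rightarrow> 'a::field \<Rightarrow> nat \<Rightarrow> 'a poly set" where
  "code_1e n \<alpha> e = cyclic_code n (min_poly3 \<alpha> * min_poly3 (\<alpha> ^ e))"

definition APN :: "('a::{field,finite} \<Rightarrow> 'a) \<Rightarrow> bool" where
  "APN f \<longleftrightarrow> Max {card {x. f (x + a) - f x = b} | a b. a \<noteq> 0} = 2"

definition has_params :: "'a::field poly set \<Rightarrow> nat \<Rightarrow> nat \<Rightarrow> nat \<Rightarrow> bool" where
  "has_params C n k d \<longleftrightarrow> (\<forall>c\<in>C. degree c < n \<and> set (coeffs c) \<subseteq> gf3) \<and>
     card C = 3 ^ k \<and> d = Min {hamming_wt c | c. c \<in> C \<and> c \<noteq> 0}"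

end

theory Submission
  imports Defs "HOL-Number_Theory.Residues" "HOL-Library.FuncSet"
begin

text \<open>
  The code consists of the polynomials over GF(3) of degree below \<open>n = 3\<^sup>m - 1\<close> that vanish at
  \<open>\<alpha>\<close> and \<open>\<alpha>\<^sup>e\<close>; its generator is the product of \<open>X - \<gamma>\<close> over the Frobenius conjugates \<open>\<gamma>\<close> of
  both. If \<open>x\<^sup>e\<close> is APN, both conjugacy classes have \<open>m\<close> elements (otherwise all values of the
  derivative \<open>(x + 1)\<^sup>e - x\<^sup>e\<close> would lie in a proper subfield, which is too small to receive each
  value at most twice) and they are disjoint (otherwise \<open>x\<^sup>e\<close> would be additive), so the
  dimension is \<open>n - 2m\<close>.

  A nonzero codeword of weight at most 3 is a relation \<open>\<Sum> u\<^sub>i x\<^sub>i = 0 = \<Sum> u\<^sub>i x\<^sub>i\<^sup>e\<close> with signs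
  \<open>u\<^sub>i = \<plusminus>1\<close> between at most three distinct nonzero \<open>x\<^sub>i\<close>; in characteristic 3 every such
  relation yields three solutions of one equation \<open>(x + a)\<^sup>e - x\<^sup>e = b\<close>. Conversely, an equation
  with exactly two solutions \<open>t\<^sub>1, t\<^sub>2\<close> gives the weight-4 relation
  \<open>(t\<^sub>1 + a) + t\<^sub>2 = (t\<^sub>2 + a) + t\<^sub>1\<close>, which also holds for the \<open>e\<close>-th powers.
\<close>

(* HOL-Algebra, imported with Residues for CHAR_dvd_CARD, would otherwise shadow these. *)
hide_const (open) up_ring.coeff up_ring.monom

section \<open>Fields of characteristic 3\<close>

lemma finite_field_nonzero_power_card:
  fixes x :: "'a::{field,finite}"
  assumes "x \<noteq> 0"
  shows "x ^ (card (UNIV :: 'a set) - 1) = 1"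
proof -
  let ?U = "UNIV - {0::'a}"
  have "(\<Prod>y\<in>?U. x * y) = (\<Prod>y\<in>?U. y)"
    by (rule prod.reindex_bij_witness[of _ "\<lambda>y. y / x" "\<lambda>y. x * y"]) (use assms in auto)
  moreover have "(\<Prod>y\<in>?U. x * y) = x ^ card ?U * (\<Prod>y\<in>?U. y)"
    by (simp add: prod.distrib)
  moreover have "card ?U = card (UNIV :: 'a set) - 1"
    by (simp add: card_Diff_singleton)
  moreover have "(\<Prod>y\<in>?U. y) \<noteq> 0"
    by simp
  ultimately show ?thesis
    by (metis mult_cancel_right2)
qed

lemma finite_field_power_card:
  fixes x :: "'a::{field,finite}"
  shows "x ^ card (UNIV :: 'a set) = x"
proof (cases "x = 0")
  case False
  have "card (UNIV :: 'a set) = Suc (card (UNIV :: 'a set) - 1)"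
    using finite_UNIV_card_ge_0[where 'a = 'a] by simp
  then have "x ^ card (UNIV :: 'a set) = x * x ^ (card (UNIV :: 'a set) - 1)"
    by (metis power_Suc)
  then show ?thesis
    using finite_field_nonzero_power_card[OF False] by simp
qed (use finite_UNIV_card_ge_0[where 'a = 'a] in simp)

lemma finite_field_power_card_power:
  fixes x :: "'a::{field,finite}"
  shows "x ^ card (UNIV :: 'a set) ^ k = x"
proof (induction k)
  case (Suc k)
  then show ?case
    by (simp only: power_Suc2 power_mult finite_field_power_card)
qed simp

lemma CHAR_eq_3_if_card:
  assumes "card (UNIV :: 'a::{field,finite} set) = 3 ^ m"
  shows "CHAR('a) = 3"
proof -
  have prime: "prime CHAR('a)"
    using prime_CHAR_semidom[where 'a = 'a] finite_imp_CHAR_pos[where 'a = 'a] by auto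
  moreover have "CHAR('a) dvd 3 ^ m"
    using CHAR_dvd_CARD[where 'a = 'a] assms by simp
  ultimately have "CHAR('a) dvd 3"
    using prime_dvd_power by blast
  with prime show ?thesis
    using primes_dvd_imp_eq[of "CHAR('a)" 3] by simp
qed

context
  assumes char3: "CHAR('a::field) = 3"
begin

lemma char3_three_eq_0: "(3::'a) = 0"
  using of_nat_CHAR[where 'a = 'a] char3 by simp

lemma char3_two_eq: "(2::'a) = -1"
  using char3_three_eq_0 by (simp add: eq_neg_iff_add_eq_0)

lemma char3_double: "(x::'a) + x = - x"
  using char3_two_eq by (metis mult_2 mult_minus1)

lemma char3_double_eq_0_iff: "(x::'a) + x = 0 \<longleftrightarrow> x = 0"
  by (simp add: char3_double)

lemma char3_one_neq_minus_one: "(1::'a) \<noteq> -1"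
  using char3_double_eq_0_iff[of 1] by (simp add: eq_neg_iff_add_eq_0)

lemma char3_add_power: "(x + y :: 'a) ^ 3 ^ t = x ^ 3 ^ t + y ^ 3 ^ t"
  by (rule freshmans_dream') (simp_all add: char3)

lemma char3_diff_power: "(x - y :: 'a) ^ 3 ^ t = x ^ 3 ^ t - y ^ 3 ^ t"
  using char3_add_power[of x "- y" t] by (simp add: power_minus_odd)

lemma char3_sum_power: "(\<Sum>i\<in>A. f i :: 'a) ^ 3 ^ t = (\<Sum>i\<in>A. f i ^ 3 ^ t)"
  by (rule freshmans_dream_sum') (simp_all add: char3)

lemma char3_power_inj: "(x::'a) ^ 3 ^ t = y ^ 3 ^ t \<Longrightarrow> x = y"
  using char3_diff_power[of x y t] by simp

lemma char3_inj_on_cube: "inj_on (\<lambda>x::'a. x ^ 3) A"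
  using char3_power_inj[where t = 1] by (auto intro: inj_onI)

end

lemma gf3_iff: "(x::'a::field) \<in> gf3 \<longleftrightarrow> x = 0 \<or> x = 1 \<or> x = -1"
proof -
  have "x ^ 3 - x = x * (x - 1) * (x + 1)"
    by (simp add: algebra_simps power3_eq_cube)
  then have "x ^ 3 = x \<longleftrightarrow> x * (x - 1) * (x + 1) = 0"
    by (metis eq_iff_diff_eq_0)
  then show ?thesis
    unfolding gf3_def by (simp add: eq_neg_iff_add_eq_0)
qed

lemma gf3_power: "(c::'a::field) \<in> gf3 \<Longrightarrow> c ^ 3 ^ t = c"
  by (induction t) (simp_all add: gf3_def power_mult flip: power_Suc2)

lemma card_gf3:
  assumes "CHAR('a::field) = 3"
  shows "card (gf3 :: 'a set) = 3"
proof -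
  have "(gf3 :: 'a set) = {0, 1, -1}"
    using gf3_iff by auto
  moreover have "card {0::'a, 1, -1} = 3"
    using char3_one_neq_minus_one[OF assms] by simp
  ultimately show ?thesis
    by simp
qed

lemma card_power_fixed_le:
  assumes "1 < n"
  shows "card {y::'a::idom. y ^ n = y} \<le> n"
proof -
  define p :: "'a poly" where "p = monom 1 n - monom 1 1"
  have "coeff p n = 1"
    using assms by (simp add: p_def coeff_monom)
  then have "p \<noteq> 0"
    by auto
  have "degree p \<le> n"
    unfolding p_def using assms by (intro degree_diff_le) (simp_all add: degree_monom_eq)
  have "{y. y ^ n = y} = {y. poly p y = 0}"
    by (simp add: p_def poly_monom)
  then show ?thesis
    using card_poly_roots_bound[OF \<open>p \<noteq> 0\<close>] \<open>degree p \<le> n\<close> by simp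
qed

lemma char3_card_ge_3:
  assumes "CHAR('a::{field,finite}) = 3"
  shows "3 \<le> card (UNIV :: 'a set)"
  using card_mono[of UNIV "{0::'a, 1, -1}"] char3_one_neq_minus_one[OF assms] by simp

section \<open>APN functions\<close>

definition diff_fiber :: "('a::ab_group_add \<Rightarrow> 'a) \<Rightarrow> 'a \<Rightarrow> 'a \<Rightarrow> 'a set" where
  "diff_fiber f a b = {x. f (x + a) - f x = b}"

lemma APN_iff_Max_diff_fiber:
  "APN f \<longleftrightarrow> Max {card (diff_fiber f a b) | a b. a \<noteq> 0} = 2"
  unfolding APN_def diff_fiber_def ..

context
  fixes f :: "'a::{field,finite} \<Rightarrow> 'a"
  assumes APN: "APN f"
begin

private lemma finite_fiber_cards: "finite {card (diff_fiber f a b) | a b. a \<noteq> 0}"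
  using finite_image_set2[of "\<lambda>a. a \<noteq> 0" "\<lambda>_. True" "\<lambda>a b. card (diff_fiber f a b)"]
  by simp

lemma APN_card_diff_fiber_le: "a \<noteq> 0 \<Longrightarrow> card (diff_fiber f a b) \<le> 2"
  using Max_ge[OF finite_fiber_cards, of "card (diff_fiber f a b)"] APN
  unfolding APN_iff_Max_diff_fiber by auto

lemma APN_card_diff_fiber_eq_2: "\<exists>a b. a \<noteq> 0 \<and> card (diff_fiber f a b) = 2"
proof -
  have "card (diff_fiber f 1 0) \<in> {card (diff_fiber f a b) | a b. a \<noteq> 0}"
    by auto
  then have "{card (diff_fiber f a b) | a b. a \<noteq> 0} \<noteq> {}"
    by blast
  from Max_in[OF finite_fiber_cards this] APN show ?thesis
    unfolding APN_iff_Max_diff_fiber by auto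
qed

lemma APN_no_three_in_diff_fiber:
  assumes "a \<noteq> 0" and "x \<in> diff_fiber f a b" "y \<in> diff_fiber f a b" "z \<in> diff_fiber f a b"
  shows "x = y \<or> y = z \<or> x = z"
proof (rule ccontr)
  assume "\<not> ?thesis"
  then have "card {x, y, z} = 3"
    by auto
  moreover have "card {x, y, z} \<le> card (diff_fiber f a b)"
    using assms by (intro card_mono) auto
  ultimately show False
    using APN_card_diff_fiber_le[OF assms(1), of b] by simp
qed

lemma APN_card_le_range_derivative:
  assumes "a \<noteq> 0"
  shows "card (UNIV :: 'a set) \<le> 2 * card (range (\<lambda>x. f (x + a) - f x))"
proof -
  let ?R = "range (\<lambda>x. f (x + a) - f x)"
  have "(UNIV :: 'a set) = (\<Union>b\<in>?R. diff_fiber f a b)"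
    by (auto simp: diff_fiber_def)
  then have "card (UNIV :: 'a set) \<le> (\<Sum>b\<in>?R. card (diff_fiber f a b))"
    by (metis card_UN_le finite)
  also have "\<dots> \<le> card ?R * 2"
    using sum_bounded_above[of ?R "\<lambda>b. card (diff_fiber f a b)" 2]
      APN_card_diff_fiber_le[OF assms] by simp
  finally show ?thesis
    by simp
qed

lemma APN_not_additive_function:
  assumes "\<And>x y. f (x + y) = f x + f y"
  shows "card (UNIV :: 'a set) \<le> 2"
proof -
  have "range (\<lambda>x. f (x + 1) - f x) = {f 1}"
    using assms by auto
  then show ?thesis
    using APN_card_le_range_derivative[of 1] by simp
qed

end

context
  fixes f :: "'a::{field,finite} \<Rightarrow> 'a"
  assumes APN: "APN f" and char3: "CHAR('a) = 3"
begin

lemma APN_char3_no_zero_sum_triple: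
  assumes "x \<noteq> y" "y \<noteq> z" "x \<noteq> z" and "x + y + z = 0" and "f x + f y + f z = 0"
  shows False
proof -
  have three: "(3::'a) = 0"
    by (rule char3_three_eq_0[OF char3])
  define a where "a = y - x"
  define b where "b = f y - f x"
  have "y + a - z = 3 * y - (x + y + z)" "z + a - x = - 3 * x + (x + y + z)"
    by (simp_all add: a_def algebra_simps)
  then have shift: "y + a = z" "z + a = x"
    using assms(4) three by simp_all
  have "f z - f y - b = - 3 * f y + (f x + f y + f z)" "f x - f z - b = 3 * f x - (f x + f y + f z)"
    by (simp_all add: b_def algebra_simps)
  then have "f (y + a) - f y = b" "f (z + a) - f z = b"
    using assms(5) three by (simp_all add: shift)
  then have "x \<in> diff_fiber f a b" "y \<in> diff_fiber f a b" "z \<in> diff_fiber f a b"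
    by (simp_all add: diff_fiber_def a_def b_def)
  moreover have "a \<noteq> 0"
    using assms(1) by (simp add: a_def)
  ultimately show False
    using APN_no_three_in_diff_fiber[OF APN] assms(1-3) by blast
qed

text \<open>The three differences along \<open>t, t + a, t + 2a, t + 3a = t\<close> sum to zero, so if two
  consecutive ones equal \<open>b\<close>, so does the third (as \<open>-2b = b\<close>).\<close>
lemma APN_char3_diff_fiber_shift:
  assumes "a \<noteq> 0" and t: "t \<in> diff_fiber f a b" and ta: "t + a \<in> diff_fiber f a b"
  shows False
proof -
  have "t + a + a + a = t + 3 * a"
    by (simp add: algebra_simps)
  then have cycle: "t + a + a + a = t"
    by (simp add: char3_three_eq_0[OF char3])
  have step: "f (t + a) = f t + b" "f (t + a + a) = f (t + a) + b"
    using t ta by (simp_all add: diff_fiber_def diff_eq_eq add.commute)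
  have "f (t + a + a + a) - f (t + a + a) = - (b + b)"
    unfolding cycle step by (simp add: algebra_simps)
  then have "t + a + a \<in> diff_fiber f a b"
    by (simp add: diff_fiber_def char3_double[OF char3])
  moreover have "t \<noteq> t + a" "t + a \<noteq> t + a + a" "t \<noteq> t + a + a"
    using assms(1) char3_double_eq_0_iff[OF char3, of a]
    by (metis add.right_neutral add_left_cancel add.assoc)+
  ultimately show False
    using APN_no_three_in_diff_fiber[OF APN assms(1) t ta] by blast
qed

end

section \<open>APN power functions in characteristic 3\<close>

context
  fixes e :: nat
  assumes APN: "APN (\<lambda>x::'a::{field,finite}. x ^ e)" and char3: "CHAR('a) = 3" and e_pos: "0 < e"
begin

lemma APN_power_even: "even e"
proof (rule ccontr)
  assume odd: "odd e"
  have "(0::'a) \<in> diff_fiber (\<lambda>x. x ^ e) 1 1" "(1::'a) \<in> diff_fiber (\<lambda>x. x ^ e) 1 1"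
    "(-1::'a) \<in> diff_fiber (\<lambda>x. x ^ e) 1 1"
    using e_pos odd by (simp_all add: diff_fiber_def char3_two_eq[OF char3])
  then show False
    using APN_no_three_in_diff_fiber[OF APN, of 1 0 1 1 "-1"] char3_one_neq_minus_one[OF char3]
    by auto
qed

lemma APN_power_minus: "(- x :: 'a) ^ e = x ^ e"
  using APN_power_even by simp

lemma APN_power_double_eq_0_iff: "(x::'a) ^ e + x ^ e = 0 \<longleftrightarrow> x = 0"
  using char3_double_eq_0_iff[OF char3] e_pos by simp

text \<open>Otherwise \<open>0\<close>, \<open>x\<close> and \<open>y\<^sup>2 / x\<close> would all solve \<open>(t + y)\<^sup>e - t\<^sup>e = y\<^sup>e\<close>.\<close>
lemma APN_power_not_additive:
  assumes "x \<noteq> 0" "y \<noteq> 0"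
  shows "(x + y :: 'a) ^ e \<noteq> x ^ e + y ^ e"
proof
  assume add: "(x + y) ^ e = x ^ e + y ^ e"
  have "y \<noteq> x"
  proof
    assume "y = x"
    then have "x ^ e + x ^ e = x ^ e"
      using add by (simp add: char3_double[OF char3] APN_power_minus)
    then have "x ^ e = 0"
      by (simp only: add_cancel_left_right)
    then show False
      using assms(1) by simp
  qed
  moreover have "y \<noteq> - x"
  proof
    assume "y = - x"
    then have "x ^ e + x ^ e = 0"
      using add APN_power_minus[of x] zero_power[OF e_pos] by (metis add.right_inverse)
    then show False
      using assms(1) APN_power_double_eq_0_iff by simp
  qed
  ultimately have "x * x \<noteq> y * y"
    by (auto simp: square_eq_iff)
  define w where "w = y / x * y"
  have "w + y = y / x * (x + y)"
    using assms(1) by (simp add: w_def field_simps)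
  then have "(w + y) ^ e - w ^ e = (y / x * (x + y)) ^ e - (y / x * y) ^ e"
    by (simp only: w_def)
  also have "\<dots> = (y / x) ^ e * ((x + y) ^ e - y ^ e)"
    by (simp only: power_mult_distrib right_diff_distrib)
  also have "\<dots> = y ^ e"
    using assms(1) add by (simp add: power_divide)
  finally have "w \<in> diff_fiber (\<lambda>t. t ^ e) y (y ^ e)"
    by (simp add: diff_fiber_def)
  moreover have "0 \<in> diff_fiber (\<lambda>t. t ^ e) y (y ^ e)" "x \<in> diff_fiber (\<lambda>t. t ^ e) y (y ^ e)"
    using e_pos add by (simp_all add: diff_fiber_def)
  moreover have "w \<noteq> 0" "x \<noteq> w"
    using assms \<open>x * x \<noteq> y * y\<close> by (simp_all add: w_def nonzero_eq_divide_eq)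
  ultimately show False
    using APN_no_three_in_diff_fiber[OF APN assms(2)] assms(1) by blast
qed

lemma APN_power_diff_fiber_zero:
  assumes "a \<noteq> 0" "0 \<in> diff_fiber (\<lambda>x. x ^ e) a b" "t \<in> diff_fiber (\<lambda>x::'a. x ^ e) a b"
  shows "t = 0"
proof (rule ccontr)
  assume "t \<noteq> 0"
  moreover have "(t + a) ^ e = t ^ e + a ^ e"
    using assms e_pos by (simp add: diff_fiber_def diff_eq_eq add.commute)
  ultimately show False
    using APN_power_not_additive assms(1) by blast
qed

lemma APN_power_diff_fiber_minus:
  assumes "a \<noteq> 0" "- a \<in> diff_fiber (\<lambda>x. x ^ e) a b" "t \<in> diff_fiber (\<lambda>x::'a. x ^ e) a b"
  shows "t = - a"
proof (rule ccontr)
  assume "t \<noteq> - a"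
  then have "t + a \<noteq> 0"
    by (simp add: eq_neg_iff_add_eq_0)
  moreover have "b = - (a ^ e)" "(t + a) ^ e - t ^ e = b"
    using assms(2,3) by (simp_all add: diff_fiber_def APN_power_minus zero_power[OF e_pos])
  then have "t ^ e = (t + a) ^ e + (- a) ^ e"
    by (simp add: APN_power_minus algebra_simps)
  ultimately show False
    using APN_power_not_additive[of "t + a" "- a"] assms(1) by simp
qed

lemma APN_power_no_relation_2:
  assumes "x \<noteq> 0" "x \<noteq> y" "v \<in> {1, -1}"
    and rel: "x + v * y = (0::'a)" and rel_power: "x ^ e + v * y ^ e = 0"
  shows False
proof -
  have "v = 1"
    using assms(2,3) rel by auto
  then have "y = - x"
    using rel by (simp add: eq_neg_iff_add_eq_0 add.commute)
  then show False
    using assms(1) rel_power \<open>v = 1\<close> e_pos by (simp add: APN_power_minus char3_two_eq[OF char3])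
qed

lemma APN_power_no_relation_3:
  assumes "x \<noteq> 0" "y \<noteq> 0" "z \<noteq> 0" "x \<noteq> y" "y \<noteq> z" "x \<noteq> z" "v \<in> {1, -1}" "w \<in> {1, -1}"
    and rel: "x + v * y + w * z = (0::'a)" and rel_power: "x ^ e + v * y ^ e + w * z ^ e = 0"
  shows False
proof -
  have sum_eq: "p = q + r" if "q + r - p = 0" for p q r :: 'a
    using that by simp
  from assms(7,8) consider "v = 1" "w = 1" | "v = 1" "w = -1" | "v = -1" "w = 1" | "v = -1" "w = -1"
    by blast
  then show False
  proof cases
    case 1
    then show False
      using APN_char3_no_zero_sum_triple[OF APN char3] assms by simp
  next
    case 2
    then have "z = x + y" "z ^ e = x ^ e + y ^ e"
      using rel rel_power by (simp_all add: sum_eq)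
    then show False
      using APN_power_not_additive assms(1,2) by simp
  next
    case 3
    then have "y = x + z" "y ^ e = x ^ e + z ^ e"
      using rel rel_power by (simp_all add: sum_eq algebra_simps)
    then show False
      using APN_power_not_additive assms(1,3) by simp
  next
    case 4
    then have "x = y + z" "x ^ e = y ^ e + z ^ e"
      using rel rel_power by (simp_all add: sum_eq algebra_simps)
    then show False
      using APN_power_not_additive assms(2,3) by simp
  qed
qed

text \<open>The first sign is normalised to \<open>1\<close>, leaving a relation of one of the two shapes above.\<close>
lemma APN_power_no_short_relation:
  assumes "finite I" "card I \<le> 3" "i \<in> I" "inj_on x I" "\<And>k. k \<in> I \<Longrightarrow> x k \<noteq> 0"
    and sign: "\<And>k. k \<in> I \<Longrightarrow> u k \<in> {1, -1}"
    and rel: "(\<Sum>k\<in>I. u k * x k) = (0::'a)" and rel_power: "(\<Sum>k\<in>I. u k * x k ^ e) = 0"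
  shows False
proof -
  define v where "v k = u i * u k" for k
  have v_sign: "v k \<in> {1, -1}" if "k \<in> I" for k
    using sign[OF that] sign[OF assms(3)] by (auto simp: v_def)
  have "(\<Sum>k\<in>I. v k * x k) = 0" "(\<Sum>k\<in>I. v k * x k ^ e) = 0"
    using rel rel_power by (simp_all add: v_def mult.assoc flip: sum_distrib_left)
  moreover have "v i = 1"
    using sign[OF assms(3)] by (auto simp: v_def)
  ultimately have rel': "x i + (\<Sum>k\<in>I - {i}. v k * x k) = 0"
    and rel_power': "x i ^ e + (\<Sum>k\<in>I - {i}. v k * x k ^ e) = 0"
    using assms(1,3) by (simp_all add: sum.remove)
  have "card (I - {i}) \<le> 2"
    using assms(1-3) by simp
  then consider (empty) "I - {i} = {}" | (one) j where "I - {i} = {j}"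
    | (two) j k where "I - {i} = {j, k}" "j \<noteq> k"
    using assms(1) by (auto simp: le_Suc_eq numeral_2_eq_2 card_Suc_eq)
  then show False
  proof cases
    case empty
    show False
      using rel' assms(5)[OF assms(3)] unfolding empty by simp
  next
    case (one j)
    then have j: "j \<in> I" "j \<noteq> i"
      by auto
    show False
    proof (rule APN_power_no_relation_2)
      show "x i \<noteq> x j"
        using j assms(3,4) by (auto dest: inj_onD)
    qed (use rel' rel_power' one j assms(3,5) v_sign in auto)
  next
    case (two j k)
    then have jk: "j \<in> I" "k \<in> I" "j \<noteq> i" "k \<noteq> i"
      by auto
    show False
    proof (rule APN_power_no_relation_3)
      show "x i \<noteq> x j" "x j \<noteq> x k" "x i \<noteq> x k"
        using jk two assms(3,4) by (auto dest: inj_onD)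
      show "x i + v j * x j + v k * x k = 0" "x i ^ e + v j * x j ^ e + v k * x k ^ e = 0"
        using rel' rel_power' two by (simp_all add: add.assoc)
    qed (use jk assms(3,5) v_sign in auto)
  qed
qed

lemma APN_power_ex_relation_4:
  "\<exists>x\<^sub>1 x\<^sub>2 x\<^sub>3 x\<^sub>4::'a. distinct [x\<^sub>1, x\<^sub>2, x\<^sub>3, x\<^sub>4] \<and> 0 \<notin> {x\<^sub>1, x\<^sub>2, x\<^sub>3, x\<^sub>4} \<and>
     x\<^sub>1 + x\<^sub>2 = x\<^sub>3 + x\<^sub>4 \<and> x\<^sub>1 ^ e + x\<^sub>2 ^ e = x\<^sub>3 ^ e + x\<^sub>4 ^ e"
proof -
  obtain a b where a: "a \<noteq> 0" and "card (diff_fiber (\<lambda>x::'a. x ^ e) a b) = 2"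
    using APN_card_diff_fiber_eq_2[OF APN] by blast
  then obtain t\<^sub>1 t\<^sub>2 where "diff_fiber (\<lambda>x. x ^ e) a b = {t\<^sub>1, t\<^sub>2}" and t12: "t\<^sub>1 \<noteq> t\<^sub>2"
    by (meson card_2_iff)
  then have t: "t\<^sub>1 \<in> diff_fiber (\<lambda>x. x ^ e) a b" "t\<^sub>2 \<in> diff_fiber (\<lambda>x. x ^ e) a b"
    by auto
  have "t\<^sub>1 \<noteq> 0" "t\<^sub>2 \<noteq> 0"
    using APN_power_diff_fiber_zero[OF a _ t(2)]
      APN_power_diff_fiber_zero[OF a _ t(1)] t t12 by auto
  moreover have "t\<^sub>1 + a \<noteq> 0" "t\<^sub>2 + a \<noteq> 0"
    using APN_power_diff_fiber_minus[OF a _ t(2)]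
      APN_power_diff_fiber_minus[OF a _ t(1)] t t12
    by (auto simp: add_eq_0_iff)
  moreover have "t\<^sub>2 \<noteq> t\<^sub>1 + a" "t\<^sub>1 \<noteq> t\<^sub>2 + a"
    using APN_char3_diff_fiber_shift[OF APN char3 a t(1)] APN_char3_diff_fiber_shift[OF APN char3 a t(2)]
      t by auto
  moreover have "(t\<^sub>1 + a) ^ e - t\<^sub>1 ^ e = (t\<^sub>2 + a) ^ e - t\<^sub>2 ^ e"
    using t by (simp add: diff_fiber_def)
  then have "(t\<^sub>1 + a) ^ e + t\<^sub>2 ^ e = (t\<^sub>2 + a) ^ e + t\<^sub>1 ^ e"
    by (simp add: algebra_simps)
  ultimately show ?thesis
    using a t12 by (intro exI[of _ "t\<^sub>1 + a"] exI[of _ t\<^sub>2] exI[of _ "t\<^sub>2 + a"] exI[of _ t\<^sub>1]) simp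
qed

lemma APN_power_Frobenius_fixed:
  assumes "0 < s" "\<And>x::'a. (x ^ e) ^ 3 ^ s = x ^ e"
  shows "card (UNIV :: 'a set) \<le> 2 * 3 ^ s"
proof -
  have "range (\<lambda>x::'a. (x + 1) ^ e - x ^ e) \<subseteq> {y. y ^ 3 ^ s = y}"
    using assms(2) by (auto simp: char3_diff_power[OF char3])
  then have "card (range (\<lambda>x::'a. (x + 1) ^ e - x ^ e)) \<le> card {y::'a. y ^ 3 ^ s = y}"
    by (intro card_mono) simp_all
  also have "\<dots> \<le> 3 ^ s"
    using assms(1) by (intro card_power_fixed_le one_less_power) simp_all
  finally have "card (range (\<lambda>x::'a. (x + 1) ^ e - x ^ e)) \<le> 3 ^ s" .
  then show ?thesis
    using APN_card_le_range_derivative[OF APN, of 1] by simp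
qed

end

section \<open>Primitive elements\<close>

context
  fixes \<alpha> :: "'a::{field,finite}"
  assumes generator: "\<forall>x::'a. x \<noteq> 0 \<longrightarrow> (\<exists>k. x = \<alpha> ^ k)"
begin

lemma generator_nonzero:
  assumes "2 < card (UNIV :: 'a set)"
  shows "\<alpha> \<noteq> 0"
proof
  assume "\<alpha> = 0"
  have "x \<in> {0, 1}" for x :: 'a
  proof (cases "x = 0")
    case False
    then obtain k where "x = \<alpha> ^ k"
      using generator by blast
    then show ?thesis
      using \<open>\<alpha> = 0\<close> by (simp add: power_0_left)
  qed simp
  then have "card (UNIV :: 'a set) \<le> card {0, 1::'a}"
    by (intro card_mono) auto
  then show False
    using assms by simp
qed

lemma generator_power_eq:
  assumes "\<alpha> ^ a = \<alpha> ^ b" "(x::'a) \<noteq> 0"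
  shows "x ^ a = x ^ b"
proof -
  obtain k where x: "x = \<alpha> ^ k"
    using generator assms(2) by blast
  have "x ^ a = (\<alpha> ^ a) ^ k" "x ^ b = (\<alpha> ^ b) ^ k"
    by (metis x power_mult mult.commute)+
  then show ?thesis
    using assms(1) by simp
qed

lemma image_generator_power:
  assumes "\<alpha> \<noteq> 0"
  shows "(\<lambda>k. \<alpha> ^ k) ` {..<card (UNIV :: 'a set) - 1} = UNIV - {0}"
proof (intro equalityI subsetI)
  fix x :: 'a
  assume "x \<in> UNIV - {0}"
  then obtain k where x: "x = \<alpha> ^ k"
    using generator by blast
  let ?n = "card (UNIV :: 'a set) - 1"
  have "card {0, 1::'a} \<le> card (UNIV :: 'a set)"
    by (rule card_mono) simp_all
  then have "0 < ?n"
    by simp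
  have "\<alpha> ^ k = \<alpha> ^ (?n * (k div ?n) + k mod ?n)"
    by (simp only: mult_div_mod_eq)
  also have "\<dots> = (\<alpha> ^ ?n) ^ (k div ?n) * \<alpha> ^ (k mod ?n)"
    by (simp only: power_add power_mult)
  also have "\<dots> = \<alpha> ^ (k mod ?n)"
    using finite_field_nonzero_power_card[OF assms] by simp
  finally show "x \<in> (\<lambda>k. \<alpha> ^ k) ` {..<?n}"
    using x \<open>0 < ?n\<close> by auto
qed (use assms in auto)

lemma inj_on_generator_power:
  assumes "\<alpha> \<noteq> 0"
  shows "inj_on (\<lambda>k. \<alpha> ^ k) {..<card (UNIV :: 'a set) - 1}"
proof (rule eq_card_imp_inj_on)
  show "card ((\<lambda>k. \<alpha> ^ k) ` {..<card (UNIV :: 'a set) - 1}) = card {..<card (UNIV :: 'a set) - 1}"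
    unfolding image_generator_power[OF assms] by (simp add: card_Diff_singleton)
qed simp

end

section \<open>Conjugates over GF(3)\<close>

text \<open>\<open>conjugates (\<alpha> ^ j)\<close> is \<open>{\<alpha> ^ i | i \<in> C\<^sub>j}\<close> for the cyclotomic coset \<open>C\<^sub>j\<close>;
  its elements are the roots of \<open>m\<^bsub>\<alpha>\<^sup>j\<^esub>\<close>.\<close>
definition conjugates :: "'a::field \<Rightarrow> 'a set" where
  "conjugates \<beta> = range (\<lambda>t. \<beta> ^ 3 ^ t)"

lemma self_in_conjugates: "\<beta> \<in> conjugates \<beta>"
  unfolding conjugates_def by (rule range_eqI[of _ _ 0]) simp

lemma power_in_conjugates:
  assumes "\<gamma> \<in> conjugates \<beta>"
  shows "\<gamma> ^ 3 ^ k \<in> conjugates \<beta>"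
proof -
  obtain t where "\<gamma> = \<beta> ^ 3 ^ t"
    using assms by (auto simp: conjugates_def)
  then have "\<gamma> ^ 3 ^ k = \<beta> ^ 3 ^ (t + k)"
    by (simp add: power_add power_mult)
  then show ?thesis
    by (simp add: conjugates_def)
qed

lemma conjugates_subset: "\<gamma> \<in> conjugates \<beta> \<Longrightarrow> conjugates \<gamma> \<subseteq> conjugates \<beta>"
  unfolding conjugates_def[of \<gamma>] using power_in_conjugates by blast

context
  fixes m :: nat
  assumes card: "card (UNIV :: 'a::{field,finite} set) = 3 ^ m" and m_pos: "0 < m"
begin

lemma conjugates_eq_image: "conjugates (\<beta>::'a) = (\<lambda>t. \<beta> ^ 3 ^ t) ` {..<m}"
proof -
  have reduce: "\<beta> ^ 3 ^ t = \<beta> ^ 3 ^ (t mod m)" for t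
  proof -
    have "(3::nat) ^ t = 3 ^ (m * (t div m) + t mod m)"
      by (simp only: mult_div_mod_eq)
    also have "\<dots> = card (UNIV :: 'a set) ^ (t div m) * 3 ^ (t mod m)"
      by (simp only: power_add power_mult card)
    finally have "\<beta> ^ 3 ^ t = (\<beta> ^ card (UNIV :: 'a set) ^ (t div m)) ^ 3 ^ (t mod m)"
      by (simp only: power_mult)
    then show ?thesis
      by (simp only: finite_field_power_card_power)
  qed
  show ?thesis
    unfolding conjugates_def
  proof (intro equalityI subsetI)
    fix x
    assume "x \<in> range (\<lambda>t. \<beta> ^ 3 ^ t)"
    then obtain t where "x = \<beta> ^ 3 ^ t"
      by blast
    then show "x \<in> (\<lambda>t. \<beta> ^ 3 ^ t) ` {..<m}"
      using m_pos reduce[of t] by (intro image_eqI[of _ _ "t mod m"]) simp_all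
  qed auto
qed

lemma card_conjugates:
  assumes "inj_on (\<lambda>t. (\<beta>::'a) ^ 3 ^ t) {..<m}"
  shows "card (conjugates \<beta>) = m"
  using card_image[OF assms] by (simp add: conjugates_eq_image)

lemma conjugates_eq:
  assumes "(\<gamma>::'a) \<in> conjugates \<beta>"
  shows "conjugates \<gamma> = conjugates \<beta>"
proof
  show "conjugates \<gamma> \<subseteq> conjugates \<beta>"
    using assms by (rule conjugates_subset)
  obtain t where t: "t < m" "\<gamma> = \<beta> ^ 3 ^ t"
    using assms by (auto simp: conjugates_eq_image)
  have "\<gamma> ^ 3 ^ (m - t) = \<beta> ^ 3 ^ m"
    using t by (simp flip: power_mult power_add)
  also have "\<dots> = \<beta>"
    using finite_field_power_card[of \<beta>] by (simp add: card)
  finally have "\<beta> \<in> conjugates \<gamma>"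
    using power_in_conjugates[OF self_in_conjugates, of \<gamma> "m - t"] by simp
  then show "conjugates \<beta> \<subseteq> conjugates \<gamma>"
    by (rule conjugates_subset)
qed

end

section \<open>Polynomials over GF(3) and minimal polynomials\<close>

definition gf3_poly :: "'a::field poly \<Rightarrow> bool" where
  "gf3_poly p \<longleftrightarrow> (\<forall>i. coeff p i \<in> gf3)"

lemma gf3_poly_iff_coeffs: "gf3_poly p \<longleftrightarrow> set (coeffs p) \<subseteq> gf3"
proof
  assume "set (coeffs p) \<subseteq> gf3"
  then have "coeff p i \<in> gf3" for i
    using coeff_in_coeffs[of p i] by (cases "p \<noteq> 0 \<and> i \<le> degree p") (auto simp: coeff_eq_0 gf3_def)
  then show "gf3_poly p"
    by (simp add: gf3_poly_def)
qed (auto simp: gf3_poly_def coeffs_def)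

definition frobenius_poly :: "'a::comm_ring_1 poly \<Rightarrow> 'a poly" where
  "frobenius_poly p = map_poly (\<lambda>c. c ^ 3) p"

lemma coeff_frobenius_poly: "coeff (frobenius_poly p) i = coeff p i ^ 3"
  unfolding frobenius_poly_def by (simp add: coeff_map_poly)

lemma gf3_poly_iff_frobenius_poly: "gf3_poly p \<longleftrightarrow> frobenius_poly p = p"
  by (auto simp: gf3_poly_def gf3_def coeff_frobenius_poly poly_eq_iff)

lemma frobenius_poly_one: "frobenius_poly 1 = 1"
  by (simp add: frobenius_poly_def)

lemma frobenius_poly_linear: "frobenius_poly [:- c, 1:] = [:- (c ^ 3), 1:]"
  by (simp add: poly_eq_iff coeff_frobenius_poly coeff_pCons power_minus_odd split: nat.split)

context
  assumes char3: "CHAR('a::field) = 3"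
begin

lemma frobenius_poly_mult: "frobenius_poly (p * q :: 'a poly) = frobenius_poly p * frobenius_poly q"
proof (rule poly_eqI)
  fix n
  have "coeff (frobenius_poly (p * q)) n = (\<Sum>i\<le>n. coeff p i * coeff q (n - i)) ^ 3 ^ 1"
    by (simp add: coeff_frobenius_poly coeff_mult)
  also have "\<dots> = (\<Sum>i\<le>n. (coeff p i * coeff q (n - i)) ^ 3 ^ 1)"
    by (rule char3_sum_power[OF char3])
  also have "\<dots> = coeff (frobenius_poly p * frobenius_poly q) n"
    by (simp add: coeff_mult coeff_frobenius_poly power_mult_distrib)
  finally show "coeff (frobenius_poly (p * q)) n = coeff (frobenius_poly p * frobenius_poly q) n" .
qed

lemma frobenius_poly_prod: "frobenius_poly (\<Prod>x\<in>A. f x :: 'a poly) = (\<Prod>x\<in>A. frobenius_poly (f x))"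
  by (induction A rule: infinite_finite_induct) (simp_all add: frobenius_poly_mult frobenius_poly_one)

lemma gf3_poly_mult: "gf3_poly p \<Longrightarrow> gf3_poly q \<Longrightarrow> gf3_poly (p * q :: 'a poly)"
  by (simp add: gf3_poly_iff_frobenius_poly frobenius_poly_mult)

lemma gf3_poly_cofactor:
  assumes "gf3_poly (p * q :: 'a poly)" "gf3_poly p" "p \<noteq> 0"
  shows "gf3_poly q"
  using assms by (simp add: gf3_poly_iff_frobenius_poly frobenius_poly_mult)

lemma poly_gf3_poly_power:
  assumes "gf3_poly p"
  shows "poly p (x ^ 3 ^ t :: 'a) = poly p x ^ 3 ^ t"
proof -
  have "poly p x ^ 3 ^ t = (\<Sum>i\<le>degree p. coeff p i ^ 3 ^ t * (x ^ i) ^ 3 ^ t)"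
    unfolding poly_altdef by (simp add: char3_sum_power[OF char3] power_mult_distrib)
  also have "\<dots> = poly p (x ^ 3 ^ t)"
    using assms unfolding poly_altdef gf3_poly_def
    by (simp add: gf3_power flip: power_mult) (simp add: mult.commute)
  finally show ?thesis ..
qed

lemma gf3_poly_conjugate_root:
  "gf3_poly p \<Longrightarrow> poly p (\<beta>::'a) = 0 \<Longrightarrow> \<gamma> \<in> conjugates \<beta> \<Longrightarrow> poly p \<gamma> = 0"
  by (auto simp: conjugates_def poly_gf3_poly_power)

end

lemma prod_linear_dvd:
  assumes "finite A" "\<And>\<gamma>. \<gamma> \<in> A \<Longrightarrow> poly p \<gamma> = 0"
  shows "(\<Prod>\<gamma>\<in>A. [:- \<gamma>, 1:]) dvd (p :: 'a::idom poly)"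
  using assms
proof (induction A arbitrary: p rule: finite_induct)
  case (insert \<delta> A)
  then obtain r where p: "p = (\<Prod>\<gamma>\<in>A. [:- \<gamma>, 1:]) * r"
    by (meson dvdE insertCI)
  have "poly (\<Prod>\<gamma>\<in>A. [:- \<gamma>, 1:]) \<delta> \<noteq> 0"
    using insert.hyps by (auto simp: poly_prod)
  then have "poly r \<delta> = 0"
    using insert.prems[of \<delta>] by (simp add: p)
  then have "[:- \<delta>, 1:] dvd r"
    by (simp add: poly_eq_0_iff_dvd)
  then have "[:- \<delta>, 1:] * (\<Prod>\<gamma>\<in>A. [:- \<gamma>, 1:]) dvd (\<Prod>\<gamma>\<in>A. [:- \<gamma>, 1:]) * r"
    by (metis dvd_refl mult.commute mult_dvd_mono)
  then show ?case
    unfolding prod.insert[OF insert.hyps] p .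
qed simp

definition conjugates_poly :: "'a::field \<Rightarrow> 'a poly" where
  "conjugates_poly \<beta> = (\<Prod>\<gamma>\<in>conjugates \<beta>. [:- \<gamma>, 1:])"

context
  assumes char3: "CHAR('a::{field,finite}) = 3"
begin

lemma cube_image_conjugates: "(\<lambda>\<gamma>. \<gamma> ^ 3) ` conjugates (\<beta>::'a) = conjugates \<beta>"
proof (rule card_subset_eq)
  show "(\<lambda>\<gamma>. \<gamma> ^ 3) ` conjugates \<beta> \<subseteq> conjugates \<beta>"
    using power_in_conjugates[where k = 1] by auto
  show "card ((\<lambda>\<gamma>. \<gamma> ^ 3) ` conjugates \<beta>) = card (conjugates \<beta>)"
    by (rule card_image[OF char3_inj_on_cube[OF char3]])
qed simp

lemma gf3_poly_conjugates_poly: "gf3_poly (conjugates_poly (\<beta>::'a))"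
proof -
  have "frobenius_poly (conjugates_poly \<beta>)
      = (\<Prod>\<delta>\<in>(\<lambda>\<gamma>. \<gamma> ^ 3) ` conjugates \<beta>. [:- \<delta>, 1:])"
    by (simp add: conjugates_poly_def frobenius_poly_prod[OF char3] frobenius_poly_linear
        prod.reindex[OF char3_inj_on_cube[OF char3]])
  then show ?thesis
    by (simp add: gf3_poly_iff_frobenius_poly cube_image_conjugates conjugates_poly_def)
qed

lemma conjugates_poly_nonzero: "conjugates_poly (\<beta>::'a) \<noteq> 0"
  by (simp add: conjugates_poly_def)

lemma lead_coeff_conjugates_poly: "lead_coeff (conjugates_poly (\<beta>::'a)) = 1"
  by (simp add: conjugates_poly_def lead_coeff_prod)

lemma degree_conjugates_poly: "degree (conjugates_poly (\<beta>::'a)) = card (conjugates \<beta>)"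
  by (simp add: conjugates_poly_def degree_prod_eq_sum_degree)

lemma poly_conjugates_poly_eq_0_iff: "poly (conjugates_poly \<beta>) (\<gamma>::'a) = 0 \<longleftrightarrow> \<gamma> \<in> conjugates \<beta>"
  by (simp add: conjugates_poly_def poly_prod)

lemma conjugates_poly_dvd:
  "gf3_poly p \<Longrightarrow> poly p (\<beta>::'a) = 0 \<Longrightarrow> conjugates_poly \<beta> dvd p"
  unfolding conjugates_poly_def
  by (rule prod_linear_dvd) (simp_all add: gf3_poly_conjugate_root[OF char3])

lemma conjugates_poly_mult_dvd_iff:
  assumes "conjugates \<alpha> \<inter> conjugates \<beta> = {}" "gf3_poly c"
  shows "conjugates_poly \<alpha> * conjugates_poly \<beta> dvd c \<longleftrightarrow> poly c (\<alpha>::'a) = 0 \<and> poly c \<beta> = 0"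
proof
  assume "conjugates_poly \<alpha> * conjugates_poly \<beta> dvd c"
  then show "poly c \<alpha> = 0 \<and> poly c \<beta> = 0"
    by (auto elim!: dvdE simp: poly_conjugates_poly_eq_0_iff self_in_conjugates)
next
  assume "poly c \<alpha> = 0 \<and> poly c \<beta> = 0"
  then have "(\<Prod>\<gamma>\<in>conjugates \<alpha> \<union> conjugates \<beta>. [:- \<gamma>, 1:]) dvd c"
    using gf3_poly_conjugate_root[OF char3 assms(2)] by (intro prod_linear_dvd) auto
  then show "conjugates_poly \<alpha> * conjugates_poly \<beta> dvd c"
    using assms(1) by (simp add: conjugates_poly_def prod.union_disjoint)
qed

lemma min_poly3_eq_conjugates_poly: "min_poly3 (\<beta>::'a) = conjugates_poly \<beta>"
  unfolding min_poly3_def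
proof (rule the_equality)
  show "lead_coeff (conjugates_poly \<beta>) = 1 \<and> set (coeffs (conjugates_poly \<beta>)) \<subseteq> gf3 \<and>
      poly (conjugates_poly \<beta>) \<beta> = 0 \<and>
      (\<forall>q. q \<noteq> 0 \<and> set (coeffs q) \<subseteq> gf3 \<and> poly q \<beta> = 0 \<longrightarrow>
        degree (conjugates_poly \<beta>) \<le> degree q)"
    using gf3_poly_conjugates_poly conjugates_poly_dvd
    by (auto simp: lead_coeff_conjugates_poly poly_conjugates_poly_eq_0_iff self_in_conjugates
        dvd_imp_degree_le simp flip: gf3_poly_iff_coeffs)
next
  fix p
  assume p: "lead_coeff p = 1 \<and> set (coeffs p) \<subseteq> gf3 \<and> poly p \<beta> = 0 \<and>
      (\<forall>q. q \<noteq> 0 \<and> set (coeffs q) \<subseteq> gf3 \<and> poly q \<beta> = 0 \<longrightarrow> degree p \<le> degree q)"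
  then have "conjugates_poly \<beta> dvd p"
    by (intro conjugates_poly_dvd) (simp_all flip: gf3_poly_iff_coeffs)
  then obtain r where r: "p = conjugates_poly \<beta> * r"
    by (rule dvdE)
  have "degree p \<le> degree (conjugates_poly \<beta>)"
    using p gf3_poly_conjugates_poly conjugates_poly_nonzero
    by (simp add: poly_conjugates_poly_eq_0_iff self_in_conjugates flip: gf3_poly_iff_coeffs)
  moreover have "r \<noteq> 0"
    using p r by auto
  ultimately have "degree r = 0"
    by (simp add: r degree_mult_eq conjugates_poly_nonzero)
  then obtain c where "r = [:c:]"
    by (rule degree_eq_zeroE)
  moreover have "lead_coeff r = 1"
    using p by (simp add: r lead_coeff_mult lead_coeff_conjugates_poly)
  ultimately have "r = 1"
    by (simp add: one_pCons)
  then show "p = conjugates_poly \<beta>"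
    by (simp add: r)
qed

end

section \<open>Cyclic codes\<close>

lemma inj_on_restrict_coeff: "inj_on (\<lambda>p. restrict (coeff p) {..<k}) {p. degree p < k}"
proof (rule inj_onI, rule poly_eqI)
  fix p q i
  assume "p \<in> {p. degree p < k}" "q \<in> {p. degree p < k}"
    and eq: "restrict (coeff p) {..<k} = restrict (coeff q) {..<k}"
  then have "degree p < k" "degree q < k"
    by simp_all
  then show "coeff p i = coeff q i"
    using fun_cong[OF eq, of i] by (cases "i < k") (simp_all add: coeff_eq_0)
qed

lemma image_restrict_coeff:
  fixes S :: "'a::comm_monoid_add set"
  assumes "0 \<in> S" "0 < k"
  shows "(\<lambda>p. restrict (coeff p) {..<k}) ` {p. (\<forall>i. coeff p i \<in> S) \<and> degree p < k}
    = (\<Pi>\<^sub>E i\<in>{..<k}. S)"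
proof (intro equalityI subsetI)
  fix F
  assume "F \<in> (\<lambda>p. restrict (coeff p) {..<k}) ` {p. (\<forall>i. coeff p i \<in> S) \<and> degree p < k}"
  then obtain p where "F = restrict (coeff p) {..<k}" and "p \<in> {p. (\<forall>i. coeff p i \<in> S) \<and> degree p < k}"
    by (rule imageE)
  then show "F \<in> (\<Pi>\<^sub>E i\<in>{..<k}. S)"
    by (simp add: restrict_PiE_iff)
next
  fix F
  assume F: "F \<in> (\<Pi>\<^sub>E i\<in>{..<k}. S)"
  define p where "p = (\<Sum>i<k. monom (F i) i)"
  have coeff_p: "coeff p i = (if i < k then F i else 0)" for i
    by (simp add: p_def coeff_sum coeff_monom)
  have "degree p \<le> k - 1"
    by (rule degree_le) (auto simp: coeff_p)
  then have "degree p < k"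
    using assms(2) by simp
  then have "p \<in> {p. (\<forall>i. coeff p i \<in> S) \<and> degree p < k}"
    using F assms(1) by (auto simp: coeff_p)
  moreover have "F = restrict (coeff p) {..<k}"
    using F by (auto simp: coeff_p PiE_def extensional_def)
  ultimately show "F \<in> (\<lambda>p. restrict (coeff p) {..<k}) ` {p. (\<forall>i. coeff p i \<in> S) \<and> degree p < k}"
    by (rule rev_image_eqI)
qed

lemma card_polys_coeffs_in:
  fixes S :: "'a::comm_monoid_add set"
  assumes "finite S" "0 \<in> S" "0 < k"
  shows "card {p. (\<forall>i. coeff p i \<in> S) \<and> degree p < k} = card S ^ k"
proof -
  have "inj_on (\<lambda>p. restrict (coeff p) {..<k}) {p. (\<forall>i. coeff p i \<in> S) \<and> degree p < k}"
    by (rule inj_on_subset[OF inj_on_restrict_coeff]) blast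
  then have "card {p. (\<forall>i. coeff p i \<in> S) \<and> degree p < k} = card (\<Pi>\<^sub>E i\<in>{..<k}. S)"
    using card_image image_restrict_coeff[OF assms(2,3)] by (metis (no_types))
  also have "\<dots> = card S ^ k"
    using assms(1) by (simp add: card_PiE)
  finally show ?thesis .
qed

lemma poly_eq_sum_nonzero_coeffs:
  "poly c (x::'a::comm_semiring_1) = (\<Sum>i\<in>{i. coeff c i \<noteq> 0}. coeff c i * x ^ i)"
proof -
  have "poly c x = (\<Sum>i\<le>degree c. coeff c i * x ^ i)"
    by (rule poly_altdef)
  also have "\<dots> = (\<Sum>i\<in>{i. coeff c i \<noteq> 0}. coeff c i * x ^ i)"
    by (rule sum.mono_neutral_right) (auto simp: le_degree)
  finally show ?thesis .
qed

context
  assumes char3: "CHAR('a::field) = 3"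
begin

lemma card_gf3_polys:
  assumes "0 < k"
  shows "card {p::'a poly. gf3_poly p \<and> degree p < k} = 3 ^ k"
proof -
  have "finite (gf3 :: 'a set)"
    using card_gf3[OF char3] by (metis card.infinite zero_neq_numeral)
  moreover have "(0::'a) \<in> gf3"
    by (simp add: gf3_def)
  ultimately have "card {p::'a poly. (\<forall>i. coeff p i \<in> gf3) \<and> degree p < k} = card (gf3::'a set) ^ k"
    using assms by (rule card_polys_coeffs_in)
  then show ?thesis
    by (simp add: gf3_poly_def card_gf3[OF char3])
qed

lemma card_cyclic_code:
  assumes "gf3_poly g" "g \<noteq> 0" "degree g < n"
  shows "card (cyclic_code n (g::'a poly)) = 3 ^ (n - degree g)"
proof -
  let ?H = "{h::'a poly. gf3_poly h \<and> degree h < n - degree g}"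
  have degree_mult: "degree (g * h) < n \<longleftrightarrow> degree h < n - degree g" for h
    using assms(2,3) by (cases "h = 0") (auto simp: degree_mult_eq)
  have "cyclic_code n g = (\<lambda>h. g * h) ` ?H"
  proof (intro equalityI subsetI)
    fix c
    assume "c \<in> cyclic_code n g"
    then obtain h where "c = g * h" "gf3_poly c" "degree c < n"
      by (auto simp: cyclic_code_def gf3_poly_iff_coeffs elim: dvdE)
    then show "c \<in> (\<lambda>h. g * h) ` ?H"
      using gf3_poly_cofactor[OF char3 _ assms(1,2)] degree_mult by auto
  qed (use gf3_poly_mult[OF char3 assms(1)] degree_mult
       in \<open>auto simp: cyclic_code_def simp flip: gf3_poly_iff_coeffs\<close>)
  moreover have "inj_on (\<lambda>h. g * h) ?H"
    using assms(2) by (auto intro: inj_onI)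
  ultimately have "card (cyclic_code n g) = card ?H"
    by (simp add: card_image)
  then show ?thesis
    using assms(3) by (simp add: card_gf3_polys)
qed

end


section \<open>The code of an APN power\<close>

lemma double_three_power_less:
  assumes "t < m"
  shows "2 * 3 ^ t < (3::nat) ^ m"
proof -
  have "3 * 3 ^ t \<le> (3::nat) ^ m"
    using power_increasing[of "Suc t" m "3::nat"] assms by simp
  moreover have "0 < (3::nat) ^ t"
    by simp
  ultimately show ?thesis
    by linarith
qed

context
  fixes \<alpha> :: "'a::{field,finite}" and m e :: nat
  assumes card: "card (UNIV :: 'a set) = 3 ^ m" and m_pos: "0 < m"
    and generator: "\<forall>x::'a. x \<noteq> 0 \<longrightarrow> (\<exists>k. x = \<alpha> ^ k)"
    and APN: "APN (\<lambda>x::'a. x ^ e)" and e_pos: "0 < e"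
begin

lemma CHAR_eq_3: "CHAR('a) = 3"
  using card by (rule CHAR_eq_3_if_card)

lemma alpha_nonzero: "\<alpha> \<noteq> 0"
  using generator_nonzero[OF generator] char3_card_ge_3[OF CHAR_eq_3] by simp

lemma card_conjugates_generator: "card (conjugates \<alpha>) = m"
proof (rule card_conjugates[OF card m_pos], rule inj_onI)
  fix i j
  assume "i \<in> {..<m}" "j \<in> {..<m}" and eq: "\<alpha> ^ 3 ^ i = \<alpha> ^ 3 ^ j"
  have small: "3 ^ t \<in> {..<card (UNIV :: 'a set) - 1}" if "t < m" for t
  proof -
    have "1 \<le> (3::nat) ^ t"
      by simp
    with double_three_power_less[OF that] have "3 ^ t < (3::nat) ^ m - 1"
      by linarith
    then show ?thesis
      by (simp add: card)
  qed
  have "(3::nat) ^ i = 3 ^ j"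
    using inj_onD[OF inj_on_generator_power[OF generator alpha_nonzero] eq]
      small \<open>i \<in> {..<m}\<close> \<open>j \<in> {..<m}\<close> by simp
  then show "i = j"
    by simp
qed

lemma card_conjugates_APN_power: "card (conjugates (\<alpha> ^ e)) = m"
proof (rule card_conjugates[OF card m_pos], rule inj_onI, rule ccontr)
  fix i j
  assume "i \<in> {..<m}" "j \<in> {..<m}" "(\<alpha> ^ e) ^ 3 ^ i = (\<alpha> ^ e) ^ 3 ^ j" "i \<noteq> j"
  then obtain l h where lh: "l < h" "h < m" "(\<alpha> ^ e) ^ 3 ^ l = (\<alpha> ^ e) ^ 3 ^ h"
    by (metis lessThan_iff linorder_neqE_nat)
  define s where "s = h - l"
  have "(3::nat) ^ s * 3 ^ l = 3 ^ h"
    using lh by (simp add: s_def flip: power_add)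
  then have "((\<alpha> ^ e) ^ 3 ^ s) ^ 3 ^ l = (\<alpha> ^ e) ^ 3 ^ h"
    by (simp add: mult.assoc flip: power_mult)
  then have "((\<alpha> ^ e) ^ 3 ^ s) ^ 3 ^ l = (\<alpha> ^ e) ^ 3 ^ l"
    using lh(3) by simp
  then have "(\<alpha> ^ e) ^ 3 ^ s = \<alpha> ^ e"
    by (rule char3_power_inj[OF CHAR_eq_3])
  then have "\<alpha> ^ (e * 3 ^ s) = \<alpha> ^ e"
    by (simp add: power_mult)
  then have "(x ^ e) ^ 3 ^ s = x ^ e" for x :: 'a
    using generator_power_eq[OF generator, of "e * 3 ^ s" e x] e_pos
    by (cases "x = 0") (simp_all add: power_mult power_0_left)
  then have "3 ^ m \<le> 2 * (3::nat) ^ s"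
    using APN_power_Frobenius_fixed[OF APN CHAR_eq_3 e_pos, of s] lh card by (simp add: s_def)
  moreover have "s < m"
    using lh by (simp add: s_def)
  ultimately show False
    using double_three_power_less[of s m] by simp
qed

lemma conjugates_disjoint: "conjugates \<alpha> \<inter> conjugates (\<alpha> ^ e) = {}"
proof (rule ccontr)
  assume "conjugates \<alpha> \<inter> conjugates (\<alpha> ^ e) \<noteq> {}"
  then obtain \<gamma> where "\<gamma> \<in> conjugates \<alpha>" "\<gamma> \<in> conjugates (\<alpha> ^ e)"
    by blast
  then have "\<alpha> ^ e \<in> conjugates \<alpha>"
    using conjugates_eq[OF card m_pos] self_in_conjugates by metis
  then obtain t where "\<alpha> ^ e = \<alpha> ^ 3 ^ t"
    by (auto simp: conjugates_def)
  then have "x ^ e = x ^ 3 ^ t" for x :: 'a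
    using generator_power_eq[OF generator, of e "3 ^ t" x] e_pos
    by (cases "x = 0") (simp_all add: power_0_left)
  then have "card (UNIV :: 'a set) \<le> 2"
    using APN_not_additive_function[OF APN] char3_add_power[OF CHAR_eq_3] by simp
  then show False
    using char3_card_ge_3[OF CHAR_eq_3] by simp
qed

lemma code_1e_eq:
  "code_1e (3 ^ m - 1) \<alpha> e
    = {c. gf3_poly c \<and> degree c < 3 ^ m - 1 \<and> poly c \<alpha> = 0 \<and> poly c (\<alpha> ^ e) = 0}"
  using conjugates_poly_mult_dvd_iff[OF CHAR_eq_3 conjugates_disjoint]
  by (auto simp: code_1e_def cyclic_code_def min_poly3_eq_conjugates_poly[OF CHAR_eq_3]
      simp flip: gf3_poly_iff_coeffs)

lemma card_code_1e:
  assumes "2 * m < 3 ^ m - 1"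
  shows "card (code_1e (3 ^ m - 1) \<alpha> e) = 3 ^ (3 ^ m - 1 - 2 * m)"
proof -
  let ?g = "conjugates_poly \<alpha> * conjugates_poly (\<alpha> ^ e)"
  have "degree ?g = 2 * m"
    by (simp add: degree_mult_eq conjugates_poly_nonzero[OF CHAR_eq_3] degree_conjugates_poly[OF CHAR_eq_3]
        card_conjugates_generator card_conjugates_APN_power)
  moreover have "gf3_poly ?g"
    by (simp add: gf3_poly_mult[OF CHAR_eq_3] gf3_poly_conjugates_poly[OF CHAR_eq_3])
  ultimately show ?thesis
    using card_cyclic_code[OF CHAR_eq_3, of ?g "3 ^ m - 1"] assms
    by (simp add: code_1e_def min_poly3_eq_conjugates_poly[OF CHAR_eq_3] conjugates_poly_nonzero[OF CHAR_eq_3])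
qed

lemma code_1e_weight_ge_4:
  assumes "c \<in> code_1e (3 ^ m - 1) \<alpha> e" "c \<noteq> 0"
  shows "4 \<le> hamming_wt c"
proof (rule ccontr)
  assume "\<not> 4 \<le> hamming_wt c"
  define I where "I = {i. coeff c i \<noteq> 0}"
  have c: "gf3_poly c" "degree c < 3 ^ m - 1" "poly c \<alpha> = 0" "poly c (\<alpha> ^ e) = 0"
    using assms(1) unfolding code_1e_eq by simp_all
  have "finite I"
    unfolding I_def by (rule finite_subset[of _ "{..degree c}"]) (auto simp: le_degree)
  moreover have "card I \<le> 3"
    using \<open>\<not> 4 \<le> hamming_wt c\<close> by (simp add: I_def hamming_wt_def)
  moreover obtain i where "i \<in> I"
    using assms(2) by (auto simp: I_def poly_eq_iff)
  moreover have "inj_on (\<lambda>i. \<alpha> ^ i) I"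
  proof (rule inj_on_subset[OF inj_on_generator_power[OF generator alpha_nonzero]])
    show "I \<subseteq> {..<card (UNIV :: 'a set) - 1}"
      using c(2) by (auto simp: I_def card dest!: le_degree)
  qed
  moreover have "coeff c k \<in> {1, -1}" if "k \<in> I" for k
    using c(1) that by (auto simp: I_def gf3_poly_def gf3_iff)
  moreover have "(\<Sum>k\<in>I. coeff c k * \<alpha> ^ k) = 0" "(\<Sum>k\<in>I. coeff c k * (\<alpha> ^ k) ^ e) = 0"
    using c(3,4) by (simp_all add: I_def poly_eq_sum_nonzero_coeffs mult.commute flip: power_mult)
  ultimately show False
    using APN_power_no_short_relation[OF APN CHAR_eq_3 e_pos, of I i "\<lambda>k. \<alpha> ^ k" "coeff c"]
      alpha_nonzero by simp
qed

lemma code_1e_weight_4: "\<exists>c\<in>code_1e (3 ^ m - 1) \<alpha> e. c \<noteq> 0 \<and> hamming_wt c = 4"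
proof -
  obtain x\<^sub>1 x\<^sub>2 x\<^sub>3 x\<^sub>4 :: 'a where x: "distinct [x\<^sub>1, x\<^sub>2, x\<^sub>3, x\<^sub>4]" "0 \<notin> {x\<^sub>1, x\<^sub>2, x\<^sub>3, x\<^sub>4}"
    "x\<^sub>1 + x\<^sub>2 = x\<^sub>3 + x\<^sub>4" "x\<^sub>1 ^ e + x\<^sub>2 ^ e = x\<^sub>3 ^ e + x\<^sub>4 ^ e"
    using APN_power_ex_relation_4[OF APN CHAR_eq_3 e_pos] by blast
  have index: "\<exists>i<3 ^ m - 1. x = \<alpha> ^ i" if "x \<noteq> 0" for x :: 'a
    using that image_generator_power[OF generator alpha_nonzero] by (auto simp: card)
  obtain i\<^sub>1 i\<^sub>2 i\<^sub>3 i\<^sub>4 where i: "i\<^sub>1 < 3 ^ m - 1" "i\<^sub>2 < 3 ^ m - 1" "i\<^sub>3 < 3 ^ m - 1" "i\<^sub>4 < 3 ^ m - 1"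
    and x_eq: "x\<^sub>1 = \<alpha> ^ i\<^sub>1" "x\<^sub>2 = \<alpha> ^ i\<^sub>2" "x\<^sub>3 = \<alpha> ^ i\<^sub>3" "x\<^sub>4 = \<alpha> ^ i\<^sub>4"
    using index[of x\<^sub>1] index[of x\<^sub>2] index[of x\<^sub>3] index[of x\<^sub>4] x(2) by auto
  have distinct_i: "distinct [i\<^sub>1, i\<^sub>2, i\<^sub>3, i\<^sub>4]"
    using x(1) unfolding x_eq by auto
  define c :: "'a poly" where "c = monom 1 i\<^sub>1 + monom 1 i\<^sub>2 - monom 1 i\<^sub>3 - monom 1 i\<^sub>4"
  have coeff_c: "coeff c j = (if j \<in> {i\<^sub>1, i\<^sub>2} then 1 else if j \<in> {i\<^sub>3, i\<^sub>4} then -1 else 0)" for j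
    using distinct_i by (auto simp: c_def coeff_monom)
  have "{j. coeff c j \<noteq> 0} = {i\<^sub>1, i\<^sub>2, i\<^sub>3, i\<^sub>4}"
    by (auto simp: coeff_c)
  then have "hamming_wt c = 4"
    using distinct_i by (simp add: hamming_wt_def)
  moreover have "c \<noteq> 0"
    using coeff_c[of i\<^sub>1] by auto
  moreover have "gf3_poly c"
    by (simp add: gf3_poly_def coeff_c gf3_iff)
  moreover have "degree c < 3 ^ m - 1"
  proof -
    have "degree c \<le> 3 ^ m - 2"
      by (rule degree_le) (use i in \<open>auto simp: coeff_c\<close>)
    then show ?thesis
      using i(1) by linarith
  qed
  moreover have "poly c \<alpha> = 0" "poly c (\<alpha> ^ e) = 0"
    using x(3,4) by (simp_all add: c_def poly_monom x_eq mult.commute flip: power_mult)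
  ultimately show ?thesis
    unfolding code_1e_eq by blast
qed

lemma min_weight_code_1e: "Min {hamming_wt c | c. c \<in> code_1e (3 ^ m - 1) \<alpha> e \<and> c \<noteq> 0} = 4"
proof (rule Min_eqI)
  have "0 < 3 ^ m - (1::nat)"
    using one_less_power[OF _ m_pos, of "3::nat"] by simp
  then have "card {p::'a poly. gf3_poly p \<and> degree p < 3 ^ m - 1} \<noteq> 0"
    by (simp add: card_gf3_polys[OF CHAR_eq_3])
  then have "finite {p::'a poly. gf3_poly p \<and> degree p < 3 ^ m - 1}"
    by (meson card.infinite)
  then have "finite (code_1e (3 ^ m - 1) \<alpha> e)"
    by (rule finite_subset[rotated]) (unfold code_1e_eq, auto)
  then show "finite {hamming_wt c | c. c \<in> code_1e (3 ^ m - 1) \<alpha> e \<and> c \<noteq> 0}"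
    by simp
  show "4 \<le> w" if "w \<in> {hamming_wt c | c. c \<in> code_1e (3 ^ m - 1) \<alpha> e \<and> c \<noteq> 0}" for w
    using that code_1e_weight_ge_4 by auto
  show "4 \<in> {hamming_wt c | c. c \<in> code_1e (3 ^ m - 1) \<alpha> e \<and> c \<noteq> 0}"
    using code_1e_weight_4 by auto
qed

lemma has_params_code_1e:
  assumes "2 * m < 3 ^ m - 1"
  shows "has_params (code_1e (3 ^ m - 1) \<alpha> e) (3 ^ m - 1) (3 ^ m - 1 - 2 * m) 4"
  using card_code_1e[OF assms] min_weight_code_1e unfolding has_params_def code_1e_eq
  by (auto simp: gf3_poly_iff_coeffs)

end

lemma two_mul_less_three_power_minus_one: "2 \<le> m \<Longrightarrow> 2 * m < 3 ^ m - 1"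
  by (induction m rule: dec_induct) simp_all

theorem theorem5:
  fixes \<alpha> :: "'a::{field,finite}" and m e :: nat
  assumes "m > 0"
    and "card (UNIV :: 'a set) = 3 ^ m"
    and "\<forall>x::'a. x \<noteq> 0 \<longrightarrow> (\<exists>k. x = \<alpha> ^ k)"
    and "1 < e" and "e < 3 ^ m - 1"
    and "APN (\<lambda>x::'a. x ^ e)"
  shows "has_params (code_1e (3 ^ m - 1) \<alpha> e) (3 ^ m - 1) (3 ^ m - 1 - 2 * m) 4"
proof -
  have "2 \<le> m"
  proof (rule ccontr)
    assume "\<not> 2 \<le> m"
    then have "m = 1"
      using assms(1) by simp
    then show False
      using assms(4,5) by simp
  qed
  then show ?thesis
    using has_params_code_1e[OF assms(2,1,3,6)] assms(4) two_mul_less_three_power_minus_one by simp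
qed

end
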